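(* If $\Phi$ is the irreducible non-reduced root system of type $\mathsf{BC}_\ell$, then there is no low triple $(\lambda,\mu,\nu)$ of dominant weights of $\Phi$.
   Context: $\Phi$ of type $\mathsf{BC}_\ell$ is the union of a root system of type $\mathsf B_\ell$ (square lengths $1,2$) and one of type $\mathsf C_\ell$ (square lengths $2,4$), with basis $\Delta=\{\alpha_1,\dots,\alpha_\ell\}$ the basis of $\mathsf B_\ell$ in Bourbaki numbering, $\alpha_\ell$ being the unique simple root with $2\alpha_\ell\in\Phi$. Integral weights are those $\lambda$ with $\langle\lambda,\alpha^\vee\rangle\in\mathbb Z$ for all $\alpha\in\Phi$; the fundamental weights $\omega_1,\dots,\omega_\ell$ are dual to $\alpha_1^\vee,\dots,\alpha_{\ell-1}^\vee,(2\alpha_\ell)^\vee$ (those of $\mathsf C_\ell$); dominant weights are $\mathbb N$-combinations of them. Order: $\mu\le\lambda$ iff $\lambda-\mu$ is a nonnegative integer combination of simple roots. A triple $(\lambda,\mu,\nu)$ of dominant weights is a low triple if (i) whenever $\lambda',\mu'$ are dominant with $\lambda'\le\lambda$, $\mu'\le\mu$, $\nu\le\lambda'+\mu'$, then $\lambda'=\lambda$, $\mu'=\mu$; and (ii) $\nu+\sum_{i=1}^\ell\alpha_i\le\lambda+\mu$. *)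

theory Defs
  imports Complex_Main "HOL-Library.Function_Algebras"
begin

text \<open>Concrete realisation of the root system BC_l in R^l. Vectors of R^l are
  functions nat => real supported on {1..l}; coordinates are e_1,...,e_l.\<close>

definition vspace :: "nat \<Rightarrow> (nat \<Rightarrow> real) set" where
  "vspace l = {x. \<forall>j. j \<notin> {1..l} \<longrightarrow> x j = 0}"

definition unitv :: "nat \<Rightarrow> nat \<Rightarrow> real" where
  "unitv i = (\<lambda>j. if j = i then 1 else 0)"

definition ip :: "nat \<Rightarrow> (nat \<Rightarrow> real) \<Rightarrow> (nat \<Rightarrow> real) \<Rightarrow> real" where
  "ip l x y = (\<Sum>j=1..l. x j * y j)"

definition smul :: "real \<Rightarrow> (nat \<Rightarrow> real) \<Rightarrow> (nat \<Rightarrow> real)" where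
  "smul c x = (\<lambda>j. c * x j)"

definition rootsB :: "nat \<Rightarrow> (nat \<Rightarrow> real) set" where
  "rootsB l = {smul s (unitv i) | s i. s \<in> {1, -1} \<and> i \<in> {1..l}}
     \<union> {smul s (unitv i) + smul t (unitv j) | s t i j.
          s \<in> {1, -1} \<and> t \<in> {1, -1} \<and> i \<in> {1..l} \<and> j \<in> {1..l} \<and> i \<noteq> j}"

definition rootsC :: "nat \<Rightarrow> (nat \<Rightarrow> real) set" where
  "rootsC l = {smul s (unitv i) + smul t (unitv j) | s t i j.
          s \<in> {1, -1} \<and> t \<in> {1, -1} \<and> i \<in> {1..l} \<and> j \<in> {1..l} \<and> i \<noteq> j}
     \<union> {smul s (unitv i) | s i. s \<in> {2, -2} \<and> i \<in> {1..l}}"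

definition rootsBC :: "nat \<Rightarrow> (nat \<Rightarrow> real) set" where
  "rootsBC l = rootsB l \<union> rootsC l"

definition coroot :: "nat \<Rightarrow> (nat \<Rightarrow> real) \<Rightarrow> (nat \<Rightarrow> real)" where
  "coroot l a = smul (2 / ip l a a) a"

text \<open>Basis of B_l in Bourbaki numbering: alpha_i = e_i - e_(i+1) (i < l), alpha_l = e_l.\<close>
definition simple_root :: "nat \<Rightarrow> nat \<Rightarrow> (nat \<Rightarrow> real)" where
  "simple_root l i = (if i < l then unitv i - unitv (Suc i) else unitv l)"

text \<open>Roots whose coroots the fundamental weights are dual to:
  alpha_1,...,alpha_(l-1), 2 alpha_l (the basis of C_l).\<close>
definition cbasis_root :: "nat \<Rightarrow> nat \<Rightarrow> (nat \<Rightarrow> real)" where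
  "cbasis_root l i = (if i < l then simple_root l i else smul 2 (simple_root l l))"

definition integral_weight :: "nat \<Rightarrow> (nat \<Rightarrow> real) \<Rightarrow> bool" where
  "integral_weight l x \<longleftrightarrow> x \<in> vspace l \<and> (\<forall>a \<in> rootsBC l. ip l x (coroot l a) \<in> \<int>)"

definition fund_weight :: "nat \<Rightarrow> nat \<Rightarrow> (nat \<Rightarrow> real)" where
  "fund_weight l i = (THE w. w \<in> vspace l \<and>
      (\<forall>j \<in> {1..l}. ip l w (coroot l (cbasis_root l j)) = (if i = j then 1 else 0)))"

definition dominant :: "nat \<Rightarrow> (nat \<Rightarrow> real) \<Rightarrow> bool" where
  "dominant l x \<longleftrightarrow> (\<exists>c :: nat \<Rightarrow> nat.
      x = (\<lambda>j. \<Sum>i=1..l. real (c i) * fund_weight l i j))"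

definition wle :: "nat \<Rightarrow> (nat \<Rightarrow> real) \<Rightarrow> (nat \<Rightarrow> real) \<Rightarrow> bool" where
  "wle l m x \<longleftrightarrow> (\<exists>c :: nat \<Rightarrow> nat.
      x - m = (\<lambda>j. \<Sum>i=1..l. real (c i) * simple_root l i j))"

definition low_triple :: "nat \<Rightarrow> (nat \<Rightarrow> real) \<Rightarrow> (nat \<Rightarrow> real) \<Rightarrow> (nat \<Rightarrow> real) \<Rightarrow> bool" where
  "low_triple l lam mu nu \<longleftrightarrow>
     dominant l lam \<and> dominant l mu \<and> dominant l nu \<and>
     (\<forall>lam' mu'. dominant l lam' \<longrightarrow> dominant l mu' \<longrightarrow> wle l lam' lam \<longrightarrow> wle l mu' mu \<longrightarrow>
         wle l nu (lam' + mu') \<longrightarrow> lam' = lam \<and> mu' = mu) \<and>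
     wle l (nu + (\<lambda>j. \<Sum>i=1..l. simple_root l i j)) (lam + mu)"

end

theory Submission imports Defs begin

(* In coordinates the fundamental weights are omega_i = e_1 + ... + e_i, and
   e_k = alpha_k + ... + alpha_l.  If a dominant lambda has a positive coefficient at
   omega_k, then lambda - e_k is still dominant (omega_k - e_k = omega_(k-1)), lies below
   lambda, and since alpha_1 + ... + alpha_(k-1) >= 0, condition (ii) gives
   nu <= (lambda - e_k) + mu; so (i) forces lambda = 0, and likewise mu = 0.  But then
   (ii) reads nu + alpha_1 + ... + alpha_l <= 0, impossible in the first coordinate,
   which is non-negative on dominant weights and monotone for the order. *)

lemma ip_unitv: "k \<in> {1..l} \<Longrightarrow> ip l w (unitv k) = w k"
  unfolding ip_def unitv_def
  by (simp add: if_distrib[of "\<lambda>x. _ * x"] sum.delta' cong: if_cong)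

lemma ip_diff: "ip l w (a - b) = ip l w a - ip l w b"
  unfolding ip_def by (simp add: algebra_simps sum_subtractf)

lemma ip_smul: "ip l w (smul c a) = c * ip l w a"
  unfolding ip_def smul_def by (simp add: sum_distrib_left algebra_simps)

lemma unitv_neq_zero: "unitv k \<noteq> 0"
  by (metis unitv_def zero_fun_def zero_neq_one)

lemma ip_coroot_cbasis_root_less:
  assumes "1 \<le> j" "j < l"
  shows "ip l w (coroot l (cbasis_root l j)) = w j - w (Suc j)"
proof -
  have root: "cbasis_root l j = unitv j - unitv (Suc j)"
    using assms by (simp add: cbasis_root_def simple_root_def)
  have "ip l (unitv j - unitv (Suc j)) (unitv j - unitv (Suc j)) = 2"
    using assms by (simp add: ip_diff ip_unitv) (simp add: unitv_def)
  then have "coroot l (cbasis_root l j) = unitv j - unitv (Suc j)"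
    unfolding coroot_def root smul_def by (simp add: fun_diff_def)
  then show ?thesis
    using assms by (simp add: ip_diff ip_unitv)
qed

lemma ip_coroot_cbasis_root_last:
  assumes "1 \<le> l"
  shows "ip l w (coroot l (cbasis_root l l)) = w l"
proof -
  have root: "cbasis_root l l = smul 2 (unitv l)"
    using assms by (simp add: cbasis_root_def simple_root_def)
  have "ip l (smul 2 (unitv l)) (smul 2 (unitv l)) = 4"
    using assms by (simp add: ip_smul ip_unitv) (simp add: unitv_def smul_def)
  then have "coroot l (cbasis_root l l) = unitv l"
    unfolding coroot_def root smul_def by auto
  then show ?thesis
    using assms by (simp add: ip_unitv)
qed

lemma vspace_eq_if_cbasis_pairings_eq:
  assumes "w \<in> vspace l" "v \<in> vspace l"
    and pairings: "\<And>j. j \<in> {1..l} \<Longrightarrow>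
      ip l w (coroot l (cbasis_root l j)) = ip l v (coroot l (cbasis_root l j))"
  shows "w = v"
proof -
  have downward: "w (l - n) = v (l - n)" if "n < l" for n
    using that
  proof (induction n)
    case 0
    then show ?case
      using pairings[of l] by (simp add: ip_coroot_cbasis_root_last)
  next
    case (Suc n)
    let ?j = "l - Suc n"
    have "w ?j - w (Suc ?j) = v ?j - v (Suc ?j)"
      using Suc.prems pairings[of ?j] by (simp add: ip_coroot_cbasis_root_less)
    moreover have "Suc ?j = l - n"
      using Suc.prems by simp
    ultimately show ?case
      using Suc by simp
  qed
  show ?thesis
  proof
    fix j
    show "w j = v j"
    proof (cases "j \<in> {1..l}")
      case True
      then show ?thesis using downward[of "l - j"] by simp
    next
      case False
      then show ?thesis using assms(1,2) by (simp add: vspace_def)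
    qed
  qed
qed

lemma fund_weight_eq:
  assumes "i \<in> {1..l}"
  shows "fund_weight l i = (\<lambda>j. if j \<in> {1..i} then 1 else 0)" (is "_ = ?w")
proof -
  have in_vspace: "?w \<in> vspace l"
    using assms by (auto simp: vspace_def)
  have pairing: "ip l ?w (coroot l (cbasis_root l j)) = (if i = j then 1 else 0)"
    if "j \<in> {1..l}" for j
  proof (cases "j < l")
    case True
    then show ?thesis using that by (simp add: ip_coroot_cbasis_root_less)
  next
    case False
    then have "j = l" using that by simp
    then show ?thesis using that assms by (simp add: ip_coroot_cbasis_root_last)
  qed
  show ?thesis
    unfolding fund_weight_def
  proof (rule the_equality)
    show "?w \<in> vspace l \<and>
        (\<forall>j\<in>{1..l}. ip l ?w (coroot l (cbasis_root l j)) = (if i = j then 1 else 0))"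
      using in_vspace pairing by blast
  next
    fix w
    assume "w \<in> vspace l \<and>
        (\<forall>j\<in>{1..l}. ip l w (coroot l (cbasis_root l j)) = (if i = j then 1 else 0))"
    then show "w = ?w"
      using in_vspace pairing by (intro vspace_eq_if_cbasis_pairings_eq) auto
  qed
qed

definition root_comb :: "nat \<Rightarrow> (nat \<Rightarrow> nat) \<Rightarrow> nat \<Rightarrow> real" where
  "root_comb l c = (\<lambda>j. \<Sum>i=1..l. real (c i) * simple_root l i j)"

lemma wle_iff_root_comb: "wle l m x \<longleftrightarrow> (\<exists>c. x - m = root_comb l c)"
  unfolding wle_def root_comb_def by simp

lemma root_comb_apply:
  "root_comb l c j =
    (if j \<in> {1..l} then real (c j) - (if j = 1 then 0 else real (c (j - 1))) else 0)"
proof -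
  have simple_root_apply: "simple_root l i j =
      (if i = j then 1 else 0) - (if i = j - 1 \<and> 2 \<le> j \<and> j \<le> l then 1 else 0)"
    if "i \<in> {1..l}" for i
    using that by (auto simp: simple_root_def unitv_def)
  have "root_comb l c j = (\<Sum>i=1..l. (if i = j then real (c i) else 0) -
      (if i = j - 1 then (if 2 \<le> j \<and> j \<le> l then real (c i) else 0) else 0))"
    unfolding root_comb_def by (rule sum.cong) (auto simp: simple_root_apply)
  also have "\<dots> = (if j \<in> {1..l} then real (c j) - (if j = 1 then 0 else real (c (j - 1))) else 0)"
    by (simp add: sum_subtractf sum.delta') arith
  finally show ?thesis .
qed

lemma root_comb_add: "root_comb l c + root_comb l d = root_comb l (\<lambda>i. c i + d i)"
  unfolding root_comb_def by (auto simp: sum.distrib[symmetric] algebra_simps)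

lemma sum_simple_roots_eq_root_comb:
  "(\<lambda>j. \<Sum>i=1..l. simple_root l i j) = root_comb l (\<lambda>_. 1)"
  unfolding root_comb_def by simp

lemma wle_refl: "wle l x x"
  unfolding wle_iff_root_comb by (rule exI[of _ "\<lambda>_. 0"]) (simp add: root_comb_def fun_eq_iff)

lemma wle_diff_unitv:
  assumes "k \<in> {1..l}"
  shows "wle l (x - unitv k) x"
proof -
  have "unitv k = root_comb l (\<lambda>i. if k \<le> i then 1 else 0)"
    using assms by (auto simp: root_comb_apply unitv_def fun_eq_iff)
  then show ?thesis
    unfolding wle_iff_root_comb by auto
qed

lemma wle_diff_unitv_if_wle_add_simple_roots:
  assumes "wle l (m + (\<lambda>j. \<Sum>i=1..l. simple_root l i j)) x" and k: "k \<in> {1..l}"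
  shows "wle l m (x - unitv k)"
proof -
  obtain c where c: "x - (m + root_comb l (\<lambda>_. 1)) = root_comb l c"
    using assms(1) unfolding wle_iff_root_comb sum_simple_roots_eq_root_comb by auto
  have "root_comb l (\<lambda>_. 1) - unitv k = root_comb l (\<lambda>i. if i < k then 1 else 0)"
    using k by (auto simp: root_comb_apply unitv_def fun_eq_iff)
  then have "x - unitv k - m = root_comb l c + root_comb l (\<lambda>i. if i < k then 1 else 0)"
    by (simp add: c[symmetric] algebra_simps)
  then show ?thesis
    unfolding wle_iff_root_comb root_comb_add by blast
qed

lemma wle_first_coord_le:
  assumes "wle l m x" "1 \<le> l"
  shows "m 1 \<le> x 1"
proof -
  obtain c where "x - m = root_comb l c"
    using assms(1) unfolding wle_iff_root_comb by blast
  then have "x 1 - m 1 = real (c 1)"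
    using assms(2) by (simp add: fun_eq_iff root_comb_apply)
  then show ?thesis by simp
qed

definition weight_comb :: "nat \<Rightarrow> (nat \<Rightarrow> nat) \<Rightarrow> nat \<Rightarrow> real" where
  "weight_comb l c = (\<lambda>j. \<Sum>i=1..l. real (c i) * fund_weight l i j)"

lemma dominant_iff_weight_comb: "dominant l x \<longleftrightarrow> (\<exists>c. x = weight_comb l c)"
  unfolding dominant_def weight_comb_def by simp

(* omega_k - e_k = omega_(k-1); for k = 1 the raised index 0 lies outside the sum. *)
lemma weight_comb_diff_unitv:
  assumes k: "k \<in> {1..l}" and pos: "0 < c k"
  shows "weight_comb l c - unitv k = weight_comb l (c(k := c k - 1, k - 1 := c (k - 1) + 1))"
    (is "_ = weight_comb l ?c'")
proof
  fix j
  have coeff_diff: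
    "real (c i) - real (?c' i) = (if i = k then 1 else 0) - (if i = k - 1 then 1 else 0)" for i
    using k Suc_leI[OF pos] by (auto simp: of_nat_diff)
  have "weight_comb l c j - weight_comb l ?c' j =
      (\<Sum>i=1..l. (real (c i) - real (?c' i)) * (if j \<in> {1..i} then 1 else 0))"
    unfolding weight_comb_def
    by (auto simp: sum_subtractf[symmetric] algebra_simps fund_weight_eq intro!: sum.cong)
  also have "\<dots> = (\<Sum>i=1..l. (if i = k then (if j \<in> {1..i} then 1 else 0) else 0) -
      (if i = k - 1 then (if j \<in> {1..i} then 1 else 0) else 0))"
    by (rule sum.cong[OF refl], subst coeff_diff) auto
  also have "\<dots> = unitv k j"
    using k by (auto simp: sum_subtractf sum.delta' unitv_def)
  finally show "(weight_comb l c - unitv k) j = weight_comb l ?c' j"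
    by simp
qed

lemma dominant_diff_unitv:
  assumes "dominant l x" "x \<noteq> 0"
  obtains k where "k \<in> {1..l}" "dominant l (x - unitv k)"
proof -
  obtain c where x: "x = weight_comb l c"
    using assms(1) unfolding dominant_iff_weight_comb by blast
  have "\<exists>k\<in>{1..l}. 0 < c k"
  proof (rule ccontr)
    assume "\<not> ?thesis"
    then have "x = 0"
      unfolding x weight_comb_def by (auto intro!: sum.neutral)
    with assms(2) show False ..
  qed
  then obtain k where "k \<in> {1..l}" "0 < c k" by blast
  then show ?thesis
    using that x weight_comb_diff_unitv dominant_iff_weight_comb by metis
qed

lemma dominant_first_coord_nonneg:
  assumes "dominant l x"
  shows "0 \<le> x 1"
proof -
  obtain c where "x = weight_comb l c"
    using assms unfolding dominant_iff_weight_comb by blast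
  then show ?thesis
    unfolding weight_comb_def by (auto simp: fund_weight_eq intro!: sum_nonneg)
qed

lemma lower_dominant_summand:
  assumes "dominant l lam" "lam \<noteq> 0"
    and "wle l (nu + (\<lambda>j. \<Sum>i=1..l. simple_root l i j)) (lam + mu)"
  obtains lam' where "dominant l lam'" "wle l lam' lam" "lam' \<noteq> lam" "wle l nu (lam' + mu)"
proof -
  obtain k where k: "k \<in> {1..l}" "dominant l (lam - unitv k)"
    using assms(1,2) dominant_diff_unitv by blast
  have "wle l nu (lam - unitv k + mu)"
    using wle_diff_unitv_if_wle_add_simple_roots[OF assms(3) k(1)] by (simp add: algebra_simps)
  then show ?thesis
    using that k wle_diff_unitv unitv_neq_zero by simp
qed

theorem mainTheorem5:
  fixes l :: nat
  assumes "l \<ge> 1"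
  shows "\<not> (\<exists>lam mu nu. low_triple l lam mu nu)"
proof
  assume "\<exists>lam mu nu. low_triple l lam mu nu"
  then obtain lam mu nu
    where dom: "dominant l lam" "dominant l mu" "dominant l nu"
      and minimal: "\<And>lam' mu'. dominant l lam' \<Longrightarrow> dominant l mu' \<Longrightarrow> wle l lam' lam \<Longrightarrow>
        wle l mu' mu \<Longrightarrow> wle l nu (lam' + mu') \<Longrightarrow> lam' = lam \<and> mu' = mu"
      and gap: "wle l (nu + (\<lambda>j. \<Sum>i=1..l. simple_root l i j)) (lam + mu)"
    unfolding low_triple_def by blast
  have "lam = 0"
    using lower_dominant_summand[OF dom(1) _ gap] minimal[OF _ dom(2) _ wle_refl] by metis
  moreover have "mu = 0"
    using lower_dominant_summand[OF dom(2) _ gap[unfolded add.commute[of lam]]]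
      minimal[OF dom(1) _ wle_refl] add.commute by metis
  moreover have "(\<Sum>i=1..l. simple_root l i 1) = 1"
    using fun_cong[OF sum_simple_roots_eq_root_comb[of l], of 1] assms by (simp add: root_comb_apply)
  ultimately have "nu 1 + 1 \<le> 0"
    using wle_first_coord_le[OF gap assms] by simp
  then show False
    using dominant_first_coord_nonneg[OF dom(3)] by simp
qed

end
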